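(* In the network model described in the context, let $\pi$ be an admissible cyclic policy and $f_i\in\mathcal{F}$. All packets of flow $f_i$ meet their deadlines under $\pi$ if and only if, for every finite horizon $T$, \[ \max_{0\le t\le T}\ \sum_{e\in\mathcal{T}^{(i)}} Q_{i,e}^{\pi}(t)\le \lambda_i\tau_i . \]
   Context: Network model: a directed graph $G=(V,E)$; time is slotted. Each link $e$ has capacity $c_e$. Interference is described by a conflict graph on the links; $\mathcal{M}$ is the set of feasible activation sets. Flow $f_i$ has a fixed route $\mathcal{T}^{(i)}$, deterministic fluid arrival rate $\lambda_i>0$ (exactly $\lambda_i$ units arrive at the source in each slot $0\le t\le T$), and deadline $\tau_i$: a packet meets its deadline if delivered to its destination within $\tau_i$ slots of its arrival. Each link $e\in\mathcal{T}^{(i)}$ reserves a slice $w_{i,e}$ for $f_i$ with its own first-come-first-served queue, of size $Q_{i,e}(t)$ at the beginning of slot $t$ (all queues initially empty). A policy $\pi$ chooses $\mu^\pi(t)\in\mathcal{M}$ each slot; admissible policies respect interference and are work-conserving (an activated link serves $\min\{Q_{i,e}(t),w_{i,e}\}$ from each slice queue; served units join the next link's queue in the next slot or are delivered at the last link). A policy is cyclic with period $K^\pi$ if $\mu^\pi(t)=\mu^\pi(t+K^\pi)$ for all $t\ge 0$. *)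

theory Defs
  imports Complex_Main
begin

text \<open>Links are pairs of nodes of the directed graph. The feasible activation sets
  are the independent sets of the conflict graph on the links.\<close>

definition feasible_sets :: "('v \<times> 'v) set \<Rightarrow> (('v \<times> 'v) \<Rightarrow> ('v \<times> 'v) \<Rightarrow> bool) \<Rightarrow> ('v \<times> 'v) set set" where
  "feasible_sets E conflict = {S. S \<subseteq> E \<and> (\<forall>a\<in>S. \<forall>b\<in>S. \<not> conflict a b)}"

definition is_path_route :: "('v \<times> 'v) set \<Rightarrow> ('v \<times> 'v) list \<Rightarrow> bool" where
  "is_path_route E r \<longleftrightarrow> r \<noteq> [] \<and> distinct r \<and> set r \<subseteq> E \<and>
     (\<forall>k. Suc k < length r \<longrightarrow> snd (r ! k) = fst (r ! Suc k))"

definition admissible :: "('v \<times> 'v) set set \<Rightarrow> (nat \<Rightarrow> ('v \<times> 'v) set) \<Rightarrow> bool" where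
  "admissible M mu \<longleftrightarrow> (\<forall>t. mu t \<in> M)"

definition cyclic :: "(nat \<Rightarrow> 'a) \<Rightarrow> bool" where
  "cyclic mu \<longleftrightarrow> (\<exists>K>0. \<forall>t. mu (t + K) = mu t)"

text \<open>Queue state of one flow (route r, slices w, arrival rate lam) under activation
  schedule mu: entry k is the slice queue at the k-th link of the route at the
  beginning of a slot. Activated links serve min(Q, w) (work conserving); served
  units join the next queue in the next slot; the lam units arriving in slot t
  join the first queue (available from slot t+1).\<close>

definition served :: "(nat \<Rightarrow> ('v \<times> 'v) set) \<Rightarrow> ('v \<times> 'v) list \<Rightarrow> (('v \<times> 'v) \<Rightarrow> real)
    \<Rightarrow> nat \<Rightarrow> (nat \<Rightarrow> real) \<Rightarrow> nat \<Rightarrow> real" where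
  "served mu r w t q k = (if r ! k \<in> mu t then min (q k) (w (r ! k)) else 0)"

primrec qstate :: "(nat \<Rightarrow> ('v \<times> 'v) set) \<Rightarrow> ('v \<times> 'v) list \<Rightarrow> (('v \<times> 'v) \<Rightarrow> real)
    \<Rightarrow> real \<Rightarrow> nat \<Rightarrow> nat \<Rightarrow> real" where
  "qstate mu r w lam 0 = (\<lambda>k. 0)"
| "qstate mu r w lam (Suc t) =
     (\<lambda>k. qstate mu r w lam t k - served mu r w t (qstate mu r w lam t) k
          + (if k = 0 then lam else served mu r w t (qstate mu r w lam t) (k - 1)))"

definition queue :: "(nat \<Rightarrow> ('v \<times> 'v) set) \<Rightarrow> ('v \<times> 'v) list \<Rightarrow> (('v \<times> 'v) \<Rightarrow> real)
    \<Rightarrow> real \<Rightarrow> ('v \<times> 'v) \<Rightarrow> nat \<Rightarrow> real" where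
  "queue mu r w lam e t = qstate mu r w lam t (THE k. k < length r \<and> r ! k = e)"

definition delivered :: "(nat \<Rightarrow> ('v \<times> 'v) set) \<Rightarrow> ('v \<times> 'v) list \<Rightarrow> (('v \<times> 'v) \<Rightarrow> real)
    \<Rightarrow> real \<Rightarrow> nat \<Rightarrow> real" where
  "delivered mu r w lam t = (\<Sum>s<t. served mu r w s (qstate mu r w lam s) (length r - 1))"

text \<open>Fluid FCFS: the unit at cumulative arrival position x (arriving in slot t iff
  lam*t < x <= lam*(t+1)) is delivered in the first slot s with delivered(s+1) >= x.\<close>
definition all_meet_deadlines :: "(nat \<Rightarrow> ('v \<times> 'v) set) \<Rightarrow> ('v \<times> 'v) list \<Rightarrow> (('v \<times> 'v) \<Rightarrow> real)
    \<Rightarrow> real \<Rightarrow> nat \<Rightarrow> bool" where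
  "all_meet_deadlines mu r w lam tau \<longleftrightarrow>
     (\<forall>t. \<forall>x. lam * real t < x \<and> x \<le> lam * real (Suc t) \<longrightarrow>
        (\<exists>s. s \<le> t + tau \<and> x \<le> delivered mu r w lam (Suc s)))"

end

theory Submission
  imports Defs
begin

text \<open>By flow conservation the total backlog of a flow at the beginning of slot \<open>t\<close> is
  \<open>\<lambda> t - D(t)\<close>, where \<open>D\<close> is the cumulative delivered amount. Under fluid FCFS the last
  unit arriving in slot \<open>t\<close> sits at position \<open>\<lambda> (t + 1)\<close>, so all deadlines are met iff
  \<open>\<lambda> (t + 1) \<le> D(t + \<tau> + 1)\<close> for all \<open>t\<close>, i.e. iff the backlog never exceeds \<open>\<lambda> \<tau>\<close>.\<close>

lemma served_nonneg:
  assumes "k < length r" "0 \<le> q k" "\<forall>e\<in>set r. 0 \<le> w e"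
  shows "0 \<le> served mu r w t q k"
  using assms by (simp add: served_def)

lemma served_le:
  assumes "0 \<le> q k" "0 \<le> w (r ! k)"
  shows "served mu r w t q k \<le> q k"
  using assms by (simp add: served_def)

lemma qstate_nonneg:
  assumes "\<forall>e\<in>set r. 0 \<le> w e" "0 \<le> lam" "k < length r"
  shows "0 \<le> qstate mu r w lam t k"
  using assms(3)
proof (induction t arbitrary: k)
  case 0
  then show ?case by simp
next
  case (Suc t)
  let ?q = "qstate mu r w lam t"
  have "served mu r w t ?q k \<le> ?q k"
    using Suc assms(1) by (intro served_le) simp_all
  moreover have "0 \<le> (if k = 0 then lam else served mu r w t ?q (k - 1))"
    using Suc assms(1,2) by (auto intro: served_nonneg)
  ultimately show ?case by simp
qed

lemma sum_qstate_eq_backlog: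
  assumes "r \<noteq> []"
  shows "(\<Sum>k<length r. qstate mu r w lam t k) = lam * real t - delivered mu r w lam t"
proof (induction t)
  case 0
  then show ?case by (simp add: delivered_def)
next
  case (Suc t)
  obtain m where m: "length r = Suc m"
    using assms by (cases r) auto
  let ?s = "served mu r w t (qstate mu r w lam t)"
  \<comment> \<open>each inner queue receives what its predecessor served, so the sum telescopes\<close>
  have "(\<Sum>k<length r. if k = 0 then lam else ?s (k - 1)) = lam + (\<Sum>k<m. ?s k)"
    unfolding m sum.lessThan_Suc_shift by simp
  moreover have "(\<Sum>k<length r. ?s k) = (\<Sum>k<m. ?s k) + ?s m"
    unfolding m by simp
  ultimately show ?case
    using Suc m by (simp add: sum.distrib sum_subtractf delivered_def algebra_simps)
qed

lemma delivered_nonneg: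
  assumes "\<forall>e\<in>set r. 0 \<le> w e" "0 \<le> lam" "r \<noteq> []"
  shows "0 \<le> delivered mu r w lam t"
  unfolding delivered_def
  using assms by (intro sum_nonneg served_nonneg qstate_nonneg) auto

lemma mono_delivered:
  assumes "\<forall>e\<in>set r. 0 \<le> w e" "0 \<le> lam" "r \<noteq> []"
  shows "mono (delivered mu r w lam)"
proof (rule incseq_SucI)
  fix t
  have "0 \<le> served mu r w t (qstate mu r w lam t) (length r - 1)"
    using assms by (intro served_nonneg qstate_nonneg) auto
  then show "delivered mu r w lam t \<le> delivered mu r w lam (Suc t)"
    by (simp add: delivered_def)
qed

lemma sum_queue_eq_sum_qstate:
  assumes "distinct r"
  shows "(\<Sum>e\<in>set r. queue mu r w lam e t) = (\<Sum>k<length r. qstate mu r w lam t k)"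
proof -
  have "(\<Sum>e\<in>set r. queue mu r w lam e t) = (\<Sum>k<length r. queue mu r w lam (r ! k) t)"
    by (rule sum.reindex_bij_betw[OF bij_betw_nth[OF assms refl refl], symmetric])
  also have "\<dots> = (\<Sum>k<length r. qstate mu r w lam t k)"
  proof (rule sum.cong)
    fix k assume "k \<in> {..<length r}"
    then have "(THE j. j < length r \<and> r ! j = r ! k) = k"
      using assms by (auto simp: nth_eq_iff_index_eq)
    then show "queue mu r w lam (r ! k) t = qstate mu r w lam t k"
      by (simp add: queue_def)
  qed simp
  finally show ?thesis .
qed

lemma all_meet_deadlines_iff_delivered:
  assumes "\<forall>e\<in>set r. 0 \<le> w e" "0 < lam" "r \<noteq> []"
  shows "all_meet_deadlines mu r w lam tau \<longleftrightarrow>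
    (\<forall>t. lam * real (Suc t) \<le> delivered mu r w lam (Suc (t + tau)))"
proof
  assume meet: "all_meet_deadlines mu r w lam tau"
  show "\<forall>t. lam * real (Suc t) \<le> delivered mu r w lam (Suc (t + tau))"
  proof
    fix t
    have "lam * real t < lam * real (Suc t)"
      using assms(2) by simp
    then obtain s where "s \<le> t + tau" "lam * real (Suc t) \<le> delivered mu r w lam (Suc s)"
      using meet unfolding all_meet_deadlines_def by blast
    moreover have "delivered mu r w lam (Suc s) \<le> delivered mu r w lam (Suc (t + tau))"
      using assms \<open>s \<le> t + tau\<close> by (intro monoD[OF mono_delivered]) auto
    ultimately show "lam * real (Suc t) \<le> delivered mu r w lam (Suc (t + tau))"
      by linarith
  qed
next
  assume "\<forall>t. lam * real (Suc t) \<le> delivered mu r w lam (Suc (t + tau))"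
  then show "all_meet_deadlines mu r w lam tau"
    unfolding all_meet_deadlines_def by (blast intro: order.trans)
qed

lemma backlog_bound_iff_delay_bound:
  fixes D :: "nat \<Rightarrow> real"
  assumes "0 \<le> a" "\<And>t. 0 \<le> D t"
  shows "(\<forall>t. a * real t - D t \<le> a * real d) \<longleftrightarrow> (\<forall>t. a * real (Suc t) \<le> D (Suc (t + d)))"
proof
  assume backlog: "\<forall>t. a * real t - D t \<le> a * real d"
  show "\<forall>t. a * real (Suc t) \<le> D (Suc (t + d))"
  proof
    fix t
    show "a * real (Suc t) \<le> D (Suc (t + d))"
      using backlog[rule_format, of "Suc (t + d)"] by (simp add: algebra_simps)
  qed
next
  assume delay: "\<forall>t. a * real (Suc t) \<le> D (Suc (t + d))"
  show "\<forall>t. a * real t - D t \<le> a * real d"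
  proof
    fix t
    show "a * real t - D t \<le> a * real d"
    proof (cases "t \<le> d")
      case True
      then show ?thesis
        using assms(1) assms(2)[of t] mult_left_mono[of "real t" "real d" a] by simp
    next
      case False
      then obtain u where u: "t = Suc (u + d)"
        by (metis add_Suc less_imp_Suc_add not_le add.commute)
      then show ?thesis
        using delay[rule_format, of u] by (simp add: algebra_simps)
    qed
  qed
qed

lemma Max_prefixes_le_iff:
  fixes f :: "nat \<Rightarrow> 'a::linorder"
  shows "(\<forall>T. Max (f ` {0..T}) \<le> b) \<longleftrightarrow> (\<forall>t. f t \<le> b)"
  by auto (meson atLeastAtMost_iff le0 order_refl)

lemma all_meet_deadlines_iff_backlog_bound:
  assumes "\<forall>e\<in>set r. 0 \<le> w e" "0 < lam" "r \<noteq> []" "distinct r"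
  shows "all_meet_deadlines mu r w lam tau \<longleftrightarrow>
    (\<forall>T. Max ((\<lambda>t. \<Sum>e\<in>set r. queue mu r w lam e t) ` {0..T}) \<le> lam * real tau)"
proof -
  have "(\<forall>T. Max ((\<lambda>t. \<Sum>e\<in>set r. queue mu r w lam e t) ` {0..T}) \<le> lam * real tau)
      \<longleftrightarrow> (\<forall>t. lam * real t - delivered mu r w lam t \<le> lam * real tau)"
    unfolding Max_prefixes_le_iff sum_queue_eq_sum_qstate[OF assms(4)]
      sum_qstate_eq_backlog[OF assms(3)] ..
  also have "\<dots> \<longleftrightarrow> (\<forall>t. lam * real (Suc t) \<le> delivered mu r w lam (Suc (t + tau)))"
    using assms by (intro backlog_bound_iff_delay_bound delivered_nonneg) auto
  also have "\<dots> \<longleftrightarrow> all_meet_deadlines mu r w lam tau"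
    using assms by (intro all_meet_deadlines_iff_delivered[symmetric]) auto
  finally show ?thesis ..
qed

theorem corollary2:
  fixes E :: "('v \<times> 'v) set"
    and c :: "('v \<times> 'v) \<Rightarrow> real"
    and conflict :: "('v \<times> 'v) \<Rightarrow> ('v \<times> 'v) \<Rightarrow> bool"
    and F :: "'f set"
    and route :: "'f \<Rightarrow> ('v \<times> 'v) list"
    and lam :: "'f \<Rightarrow> real"
    and tau :: "'f \<Rightarrow> nat"
    and w :: "'f \<Rightarrow> ('v \<times> 'v) \<Rightarrow> real"
    and mu :: "nat \<Rightarrow> ('v \<times> 'v) set"
    and i :: 'f
  assumes "finite E" and "finite F"
    and "\<forall>j\<in>F. is_path_route E (route j)"
    and "\<forall>j\<in>F. lam j > 0"
    and "\<forall>j\<in>F. \<forall>e\<in>set (route j). w j e > 0"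
    and "\<forall>e\<in>E. (\<Sum>j\<in>{j\<in>F. e \<in> set (route j)}. w j e) \<le> c e"
    and "admissible (feasible_sets E conflict) mu"
    and "cyclic mu"
    and "i \<in> F"
  shows "all_meet_deadlines mu (route i) (w i) (lam i) (tau i) \<longleftrightarrow>
    (\<forall>T::nat. Max ((\<lambda>t. \<Sum>e\<in>set (route i). queue mu (route i) (w i) (lam i) e t) ` {0..T})
               \<le> lam i * real (tau i))"
  using assms(3-5,9) unfolding is_path_route_def
  by (intro all_meet_deadlines_iff_backlog_bound) (auto simp: less_imp_le)

end
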